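(* Consider DODA in the multi-agent setting of the context. Let the maximum delay be bounded by $\tau$, assume that for every agent $i$ and time $t$, $\mathcal S_t\subset\mathcal R^i_t$, and that the feedback of time step $t$ is the whole vector field $V_t=\nabla f_t$, which can be evaluated anywhere without delay. Suppose each $V_t$ is $L$-Lipschitz and that $\|V_t(x)\|\le G$, $\|\tilde V_t(x)\|\le G$ for all $t$ and $x$, where $\tilde V_t=V_s$ for some $s\in\mathcal S_t$. Let $D_t=\sum_{s\in\mathcal S_t}\|V_s(x_s)-\tilde V_s(x_s)\|^2$. Then for any $p$ with $\|p-x_1\|\le r$, running DODA with $\tilde g_{t+1/2}=\tilde V_t(x_t)$, \[\gamma_t=\min\Big(\frac{r\sqrt{4\tau+1}}{2\sqrt{D_t+4G^2(\tau+1)}},\ \frac{1}{\sqrt2L}\Big),\qquad \eta_t=\min\Big(\frac{r}{2\sqrt{(4\tau+1)(D_t+4G^2(3\tau+1))}},\ \frac{1}{\sqrt2L(4\tau+1)}\Big)\] guarantees \[R_T(p)\le\max\Big(\sqrt2r^2L(4\tau+1),\ 2r\sqrt{(4\tau+1)\big(V_T+4G^2(3\tau+1)\big)}\Big),\] where $V_T=\sum_{t=1}^T\|V_t(x_t)-\tilde V_t(x_t)\|^2$.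
   Context: Unconstrained Euclidean setting: $\mathcal V$ finite-dimensional Euclidean space; losses $f_t$ convex and differentiable. Several agents; at each round $t=1,\dots,T$ one agent $i(t)$ is active. $\mathcal S^i_t\subset\{1,\dots,t-1\}$: timestamps of feedback available to agent $i$ at time $t$, nondecreasing in $t$; $\mathcal S_t=\mathcal S^{i(t)}_t$. DODA: given $x_1$, $x_t=x_1-\eta_t\sum_{s\in\mathcal S_t}g_{s+1/2}$, $x_{t+1/2}=x_t-\gamma_t\tilde g_{t+1/2}$; the active agent plays $x_{t+1/2}$, and $g_{t+1/2}=V_t(x_{t+1/2})$. Regret: $R_T(p)=\sum_{t=1}^Tf_t(x_{t+1/2})-\sum_{t=1}^Tf_t(p)$. Maximum delay bounded by $\tau$: $\{1,\dots,t-\tau-1\}\subset\mathcal S_t$. Per-agent arrival order: for each agent $i$, $\sigma_i$ is a permutation of $\{1,\dots,T\}$ listing the order in which agent $i$ receives the feedback of time steps $1,\dots,T$, consistent with availability ($\mathcal S^i_t=\{\sigma_i(1),\dots,\sigma_i(|\mathcal S^i_t|)\}$); $\mathcal R^i_t=\{\sigma_i(1),\dots,\sigma_i(\sigma_i^{-1}(t)-1)\}$ is the set of timestamps of feedback received by $i$ before that of time $t$. *)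

theory Defs
  imports "HOL-Analysis.Analysis"
begin

text \<open>min(a, 1/b) with the convention 1/0 = +infinity (so that the term
  1/(sqrt 2 L) is ignored when L = 0).\<close>
definition min_recip :: "real \<Rightarrow> real \<Rightarrow> real" where
  "min_recip a b = (if b = 0 then a else min a (1 / b))"

end

theory Submission
  imports Defs
begin

text \<open>Let g_t = V_t(x_{t+1/2}) be the gradient at the played point. By convexity the regret is
  at most sum_t <g_t, x_{t+1/2} - p>, and unrolling the two DODA steps rewrites this as
  <sum_t g_t, x_1 - p> - sum_t eta_t <g_t, sum_{s in S_t} g_s> - sum_t gamma_t <g_t, Vt_t(x_t)>.
  Since L gamma_t <= 1/sqrt 2, the last sum is at least
  sum_t gamma_t (|g_t|^2/2 - |V_t(x_t) - Vt_t(x_t)|^2). The received sets are nested, so eta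
  decreases along them, and the middle sum is a quadratic form in the g_t that dominates
  e/2 |sum_t g_t|^2, where e <= eta_t is the step size computed from V_T: the kernel
  min(eta_s, eta_t) is positive semidefinite, and the at most 2 tau rounds concurrent with a given
  round are paid for by gamma_t >= (4 tau + 1) eta_t. Maximising r w - e w^2/2 over w and
  bounding the errors by the usual adaptive square-root telescoping gives the bound.\<close>

lemma convex_on_gradient_inequality:
  fixes f :: "'a::real_inner \<Rightarrow> real"
  assumes convex: "convex_on UNIV f" and deriv: "(f has_derivative (\<lambda>h. v \<bullet> h)) (at y)"
  shows "f y + v \<bullet> (p - y) \<le> f p"
proof -
  define \<phi> where "\<phi> = (\<lambda>u::real. f (y + u *\<^sub>R (p - y)))"
  have "((\<lambda>u::real. y + u *\<^sub>R (p - y)) has_derivative (\<lambda>u. u *\<^sub>R (p - y))) (at 0)"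
    by (auto intro!: derivative_eq_intros)
  with deriv have "(\<phi> has_derivative (\<lambda>u. v \<bullet> (u *\<^sub>R (p - y)))) (at 0)"
    unfolding \<phi>_def using has_derivative_compose by fastforce
  hence "(\<phi> has_field_derivative (v \<bullet> (p - y))) (at 0)"
    unfolding has_field_derivative_def by (simp add: mult.commute[of _ "v \<bullet> (p - y)"])
  moreover have "convex_on UNIV \<phi>"
  proof (rule convex_onI)
    fix t a b :: real assume "0 < t" "t < 1"
    have "y + ((1 - t) *\<^sub>R a + t *\<^sub>R b) *\<^sub>R (p - y)
        = (1 - t) *\<^sub>R (y + a *\<^sub>R (p - y)) + t *\<^sub>R (y + b *\<^sub>R (p - y))"
      by (simp add: algebra_simps)
    then show "\<phi> ((1 - t) *\<^sub>R a + t *\<^sub>R b) \<le> (1 - t) * \<phi> a + t * \<phi> b"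
      unfolding \<phi>_def using convex_onD[OF convex, of t] \<open>0 < t\<close> \<open>t < 1\<close> by auto
  qed simp
  ultimately have "\<phi> 1 - \<phi> 0 \<ge> v \<bullet> (p - y) * (1 - 0)"
    by (intro convex_on_imp_above_tangent[where A = UNIV]) auto
  then show ?thesis by (simp add: \<phi>_def)
qed

lemma sum_convex_diff_le_sum_inner_gradient:
  fixes f :: "'i \<Rightarrow> 'a::real_inner \<Rightarrow> real"
  assumes "\<And>t. t \<in> I \<Longrightarrow> convex_on UNIV (f t)"
    and "\<And>t y. t \<in> I \<Longrightarrow> (f t has_derivative (\<lambda>h. V t y \<bullet> h)) (at y)"
  shows "(\<Sum>t\<in>I. f t (y t)) - (\<Sum>t\<in>I. f t p) \<le> (\<Sum>t\<in>I. V t (y t) \<bullet> (y t - p))"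
proof -
  have "f t (y t) - f t p \<le> V t (y t) \<bullet> (y t - p)" if "t \<in> I" for t
    using convex_on_gradient_inequality[OF assms[OF that], of "y t" p]
    by (simp add: inner_diff_right)
  then show ?thesis
    by (simp add: sum_subtractf[symmetric] sum_mono)
qed

text \<open>The kernel \<open>min (\<mu> s) (\<mu> t)\<close> is positive semidefinite: subtracting the smallest weight
  splits off the rank-one term \<open>m * norm (\<Sum>g)\<^sup>2\<close> and leaves a kernel vanishing on one index.\<close>
lemma min_kernel_sum_inner_nonneg:
  fixes g :: "'b \<Rightarrow> 'a::real_inner"
  assumes "finite A" "\<And>s. s \<in> A \<Longrightarrow> 0 \<le> \<mu> s"
  shows "0 \<le> (\<Sum>s\<in>A. \<Sum>t\<in>A. min (\<mu> s) (\<mu> t) * (g s \<bullet> g t))"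
  using assms
proof (induction A arbitrary: \<mu> rule: finite_psubset_induct)
  case (psubset A)
  show ?case
  proof (cases "A = {}")
    case False
    define m where "m = Min (\<mu> ` A)"
    have "m \<in> \<mu> ` A"
      unfolding m_def using psubset.hyps False by (intro Min_in) auto
    then obtain a where a: "a \<in> A" "\<mu> a = m"
      by auto
    have m_le: "m \<le> \<mu> s" if "s \<in> A" for s
      using psubset.hyps that by (simp add: m_def)
    define \<mu>' where "\<mu>' s = \<mu> s - m" for s
    have split: "min (\<mu> s) (\<mu> t) = m + min (\<mu>' s) (\<mu>' t)" for s t
      by (simp add: \<mu>'_def min_def)
    have "(\<Sum>s\<in>A. \<Sum>t\<in>A. m * (g s \<bullet> g t)) = m * (norm (\<Sum>s\<in>A. g s))\<^sup>2"
      by (simp add: power2_norm_eq_inner inner_sum_left inner_sum_right sum_distrib_left inner_commute)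
    moreover have "0 \<le> m"
      using a psubset.prems by force
    moreover have "(\<Sum>s\<in>A. \<Sum>t\<in>A. min (\<mu>' s) (\<mu>' t) * (g s \<bullet> g t))
        = (\<Sum>s\<in>A - {a}. \<Sum>t\<in>A - {a}. min (\<mu>' s) (\<mu>' t) * (g s \<bullet> g t))"
    proof -
      have vanish: "min (\<mu>' s) (\<mu>' t) = 0" if "s \<in> A" "t \<in> A" "s = a \<or> t = a" for s t
        using that a m_le[of s] m_le[of t] by (auto simp: \<mu>'_def min_def)
      have "(\<Sum>s\<in>A. \<Sum>t\<in>A. min (\<mu>' s) (\<mu>' t) * (g s \<bullet> g t))
          = (\<Sum>s\<in>A. \<Sum>t\<in>A - {a}. min (\<mu>' s) (\<mu>' t) * (g s \<bullet> g t))"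
        using psubset.hyps by (intro sum.cong refl sum.mono_neutral_right) (auto simp: vanish)
      also have "\<dots> = (\<Sum>s\<in>A - {a}. \<Sum>t\<in>A - {a}. min (\<mu>' s) (\<mu>' t) * (g s \<bullet> g t))"
        using psubset.hyps by (intro sum.mono_neutral_right) (auto simp: vanish)
      finally show ?thesis .
    qed
    moreover have "0 \<le> (\<Sum>s\<in>A - {a}. \<Sum>t\<in>A - {a}. min (\<mu>' s) (\<mu>' t) * (g s \<bullet> g t))"
      using psubset.IH[of "A - {a}" \<mu>'] a(1) m_le by (auto simp: \<mu>'_def)
    ultimately show ?thesis
      by (simp add: split distrib_right sum.distrib)
  qed simp
qed

lemma min_kernel_sum_inner_ge:
  fixes g :: "'b \<Rightarrow> 'a::real_inner"
  assumes "finite A" "\<And>s. s \<in> A \<Longrightarrow> e \<le> \<mu> s"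
  shows "e * (norm (\<Sum>s\<in>A. g s))\<^sup>2 \<le> (\<Sum>s\<in>A. \<Sum>t\<in>A. min (\<mu> s) (\<mu> t) * (g s \<bullet> g t))"
proof -
  have "0 \<le> (\<Sum>s\<in>A. \<Sum>t\<in>A. min (\<mu> s - e) (\<mu> t - e) * (g s \<bullet> g t))"
    using assms by (intro min_kernel_sum_inner_nonneg) auto
  moreover have "min (\<mu> s - e) (\<mu> t - e) = min (\<mu> s) (\<mu> t) - e" for s t
    by (simp add: min_def)
  moreover have "(\<Sum>s\<in>A. \<Sum>t\<in>A. e * (g s \<bullet> g t)) = e * (norm (\<Sum>s\<in>A. g s))\<^sup>2"
    by (simp add: power2_norm_eq_inner inner_sum_left inner_sum_right sum_distrib_left inner_commute)
  ultimately show ?thesis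
    by (simp add: left_diff_distrib sum_subtractf)
qed

lemma min_mult_inner_le:
  fixes u v :: "'a::real_inner"
  assumes "0 \<le> a" "0 \<le> b"
  shows "min a b * (u \<bullet> v) \<le> (a * (norm u)\<^sup>2 + b * (norm v)\<^sup>2) / 2"
proof -
  have "u \<bullet> v \<le> ((norm u)\<^sup>2 + (norm v)\<^sup>2) / 2"
    using Cauchy_Schwarz_ineq2[of u v] sum_squares_bound[of "norm u" "norm v"]
    by (simp add: power2_eq_square)
  then have "min a b * (u \<bullet> v) \<le> min a b * (((norm u)\<^sup>2 + (norm v)\<^sup>2) / 2)"
    using assms by (intro mult_left_mono) auto
  also have "\<dots> \<le> (a * (norm u)\<^sup>2 + b * (norm v)\<^sup>2) / 2"
    by (simp add: add_mono mult_right_mono distrib_left divide_right_mono)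
  finally show ?thesis .
qed

lemma card_near_le: "card {t. t \<noteq> s \<and> s \<le> t + \<tau> \<and> t \<le> s + \<tau>} \<le> 2 * (\<tau>::nat)"
proof -
  have "card {t. t \<noteq> s \<and> s \<le> t + \<tau> \<and> t \<le> s + \<tau>} \<le> card ({s - \<tau>..<s} \<union> {s<..s + \<tau>})"
    by (intro card_mono) auto
  also have "\<dots> \<le> 2 * \<tau>"
    using card_Un_le[of "{s - \<tau>..<s}" "{s<..s + \<tau>}"] by simp
  finally show ?thesis .
qed

lemma sum_sum_near_le:
  fixes h :: "nat \<Rightarrow> real"
  assumes "finite I" "\<And>s. s \<in> I \<Longrightarrow> 0 \<le> h s"
    and near: "\<And>s t. s \<in> I \<Longrightarrow> t \<in> I \<Longrightarrow> P s t \<Longrightarrow> t \<noteq> s \<and> s \<le> t + \<tau> \<and> t \<le> s + \<tau>"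
  shows "(\<Sum>s\<in>I. \<Sum>t\<in>I. if P s t then h s else 0) \<le> 2 * real \<tau> * (\<Sum>s\<in>I. h s)"
proof -
  have "(\<Sum>t\<in>I. if P s t then h s else 0) \<le> 2 * real \<tau> * h s" if "s \<in> I" for s
  proof -
    have "card {t \<in> I. P s t} \<le> card {t. t \<noteq> s \<and> s \<le> t + \<tau> \<and> t \<le> s + \<tau>}"
      using near[OF that] by (intro card_mono) (auto simp: card_near_le)
    also have "\<dots> \<le> 2 * \<tau>" by (rule card_near_le)
    finally have "real (card {t \<in> I. P s t}) * h s \<le> 2 * real \<tau> * h s"
      using assms(2)[OF that] by (intro mult_right_mono) auto
    then show ?thesis
      using assms(1) by (simp add: sum.If_cases Int_def)
  qed
  then show ?thesis
    by (simp add: sum_distrib_left sum_mono)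
qed

lemma divide_sqrt_le_sqrt_diff:
  fixes a F :: real
  assumes "0 \<le> a" "a \<le> F"
  shows "a / sqrt F \<le> 2 * (sqrt F - sqrt (F - a))"
proof (cases "F = 0")
  case False
  define u v where "u = sqrt F" and "v = sqrt (F - a)"
  have "0 < u" "0 \<le> v" "v \<le> u"
    using assms False by (auto simp: u_def v_def)
  have "a = (u - v) * (u + v)"
    using assms by (simp add: u_def v_def algebra_simps flip: power2_eq_square)
  also have "\<dots> \<le> (u - v) * (2 * u)"
    using \<open>v \<le> u\<close> by (intro mult_left_mono) auto
  finally have "a \<le> 2 * (u - v) * u"
    by (simp add: algebra_simps)
  then have "a / u \<le> 2 * (u - v)"
    using \<open>0 < u\<close> by (simp add: pos_divide_le_eq)
  then show ?thesis
    by (simp add: u_def v_def)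
qed (use assms in simp)

lemma sum_divide_sqrt_partial_sums_le:
  fixes a :: "nat \<Rightarrow> real"
  assumes "\<And>t. 0 \<le> a t"
  shows "(\<Sum>t=1..T. a t / sqrt (\<Sum>s=1..t. a s)) \<le> 2 * sqrt (\<Sum>t=1..T. a t)"
proof (induction T)
  case (Suc T)
  have "a (Suc T) / sqrt (\<Sum>s=1..Suc T. a s)
      \<le> 2 * (sqrt (\<Sum>s=1..Suc T. a s) - sqrt (\<Sum>s=1..T. a s))"
    using divide_sqrt_le_sqrt_diff[of "a (Suc T)" "\<Sum>s=1..Suc T. a s"] assms
    by (simp add: sum_nonneg)
  with Suc show ?case
    by simp
qed simp

lemma sum_mult_adaptive_step_le:
  fixes a \<gamma> B :: "nat \<Rightarrow> real"
  assumes "\<And>t. 0 \<le> a t" "0 \<le> c"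
    and partial: "\<And>t. t \<in> {1..T} \<Longrightarrow> (\<Sum>s=1..t. a s) \<le> B t"
    and step: "\<And>t. t \<in> {1..T} \<Longrightarrow> \<gamma> t \<le> c / sqrt (B t)"
  shows "(\<Sum>t=1..T. \<gamma> t * a t) \<le> 2 * c * sqrt (\<Sum>t=1..T. a t)"
proof -
  have "\<gamma> t * a t \<le> c * (a t / sqrt (\<Sum>s=1..t. a s))" if t: "t \<in> {1..T}" for t
  proof (cases "a t = 0")
    case False
    have "a t \<le> (\<Sum>s=1..t. a s)"
      using t assms(1) by (intro member_le_sum) auto
    then have pos: "0 < (\<Sum>s=1..t. a s)"
      using False assms(1)[of t] by linarith
    have "\<gamma> t * a t \<le> c / sqrt (B t) * a t"
      using step[OF t] assms(1) by (rule mult_right_mono)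
    also have "\<dots> \<le> c / sqrt (\<Sum>s=1..t. a s) * a t"
      using partial[OF t] pos assms by (intro mult_right_mono divide_left_mono) auto
    finally show ?thesis
      by simp
  qed simp
  then have "(\<Sum>t=1..T. \<gamma> t * a t) \<le> (\<Sum>t=1..T. c * (a t / sqrt (\<Sum>s=1..t. a s)))"
    by (rule sum_mono)
  also have "\<dots> = c * (\<Sum>t=1..T. a t / sqrt (\<Sum>s=1..t. a s))"
    by (rule sum_distrib_left[symmetric])
  also have "\<dots> \<le> c * (2 * sqrt (\<Sum>t=1..T. a t))"
    using sum_divide_sqrt_partial_sums_le[of a T] assms by (intro mult_left_mono) auto
  finally show ?thesis
    by simp
qed

lemma sum_upto_le_delayed_sum:
  fixes a :: "nat \<Rightarrow> real"
  assumes "{1..t - \<tau> - 1} \<subseteq> A" "finite A" "\<And>s. 0 \<le> a s" "0 \<le> M"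
    and "\<And>s. s \<in> {1..t} \<Longrightarrow> a s \<le> M"
  shows "(\<Sum>s=1..t. a s) \<le> (\<Sum>s\<in>A. a s) + (real \<tau> + 1) * M"
proof -
  define J where "J = {1..t} - {1..t - \<tau> - 1}"
  have "(\<Sum>s=1..t. a s) = (\<Sum>s\<in>J. a s) + (\<Sum>s=1..t - \<tau> - 1. a s)"
    unfolding J_def by (rule sum.subset_diff) auto
  also have "(\<Sum>s=1..t - \<tau> - 1. a s) \<le> (\<Sum>s\<in>A. a s)"
    using assms by (intro sum_mono2) auto
  also have "(\<Sum>s\<in>J. a s) \<le> real (card J) * M"
    using sum_bounded_above[of J a M] assms(5) by (auto simp: J_def)
  also have "\<dots> \<le> (real \<tau> + 1) * M"
  proof -
    have "card J \<le> card {t - \<tau>..t}"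
      by (intro card_mono) (auto simp: J_def)
    then show ?thesis
      using \<open>0 \<le> M\<close> by (intro mult_right_mono) auto
  qed
  finally show ?thesis
    by simp
qed

lemma lipschitz_extragradient_inner_lower_bound:
  fixes F :: "'a::real_inner \<Rightarrow> 'a"
  assumes "L-lipschitz_on UNIV F" and small: "2 * (L * \<gamma>)\<^sup>2 \<le> 1" and "0 \<le> \<gamma>"
  shows "\<gamma> / 2 * (norm (F (y - \<gamma> *\<^sub>R m)))\<^sup>2 - \<gamma> * (norm (F y - m))\<^sup>2
    \<le> \<gamma> * (F (y - \<gamma> *\<^sub>R m) \<bullet> m)"
proof -
  define g d where "g = F (y - \<gamma> *\<^sub>R m)" and "d = norm (F y - m)"
  have "dist g (F y) \<le> L * dist (y - \<gamma> *\<^sub>R m) y"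
    using assms(1) unfolding g_def lipschitz_on_def by blast
  then have "norm (g - F y) \<le> L * \<gamma> * norm m"
    using \<open>0 \<le> \<gamma>\<close> by (simp add: dist_norm)
  then have "norm (g - m) \<le> L * \<gamma> * norm m + d"
    using norm_triangle_ineq[of "g - F y" "F y - m"] by (simp add: d_def)
  then have "(norm (g - m))\<^sup>2 \<le> (L * \<gamma> * norm m + d)\<^sup>2"
    by (intro power_mono) auto
  also have "\<dots> \<le> 2 * (L * \<gamma>)\<^sup>2 * (norm m)\<^sup>2 + 2 * d\<^sup>2"
    using sum_squares_bound[of "L * \<gamma> * norm m" d]
    by (simp add: power2_eq_square algebra_simps)
  also have "\<dots> \<le> (norm m)\<^sup>2 + 2 * d\<^sup>2"
    using mult_right_mono[OF small, of "(norm m)\<^sup>2"] by simp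
  finally have "(norm (g - m))\<^sup>2 \<le> (norm m)\<^sup>2 + 2 * d\<^sup>2" .
  moreover have "(norm (g - m))\<^sup>2 = (norm g)\<^sup>2 - 2 * (g \<bullet> m) + (norm m)\<^sup>2"
    by (simp add: power2_norm_eq_inner inner_diff_left inner_diff_right inner_commute)
  ultimately have "(norm g)\<^sup>2 / 2 - d\<^sup>2 \<le> g \<bullet> m"
    by simp
  from mult_left_mono[OF this \<open>0 \<le> \<gamma>\<close>] show ?thesis
    by (simp add: g_def d_def right_diff_distrib)
qed

lemma sum_inner_doda_step_eq:
  assumes x: "\<And>t. t \<in> {1..T} \<Longrightarrow> x t = x 1 - \<eta> t *\<^sub>R (\<Sum>s\<in>S t. V s (xh s))"
    and xh: "\<And>t. t \<in> {1..T} \<Longrightarrow> xh t = x t - \<gamma> t *\<^sub>R Vt t (x t)"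
  shows "(\<Sum>t=1..T. V t (xh t) \<bullet> (xh t - p))
    = (\<Sum>t=1..T. V t (xh t)) \<bullet> (x 1 - p) - (\<Sum>t=1..T. \<eta> t * (V t (xh t) \<bullet> (\<Sum>s\<in>S t. V s (xh s))))
      - (\<Sum>t=1..T. \<gamma> t * (V t (xh t) \<bullet> Vt t (x t)))"
proof -
  have "V t (xh t) \<bullet> (xh t - p) = V t (xh t) \<bullet> (x 1 - p)
      - \<eta> t * (V t (xh t) \<bullet> (\<Sum>s\<in>S t. V s (xh s))) - \<gamma> t * (V t (xh t) \<bullet> Vt t (x t))"
    if "t \<in> {1..T}" for t
  proof -
    have "xh t = x 1 - \<eta> t *\<^sub>R (\<Sum>s\<in>S t. V s (xh s)) - \<gamma> t *\<^sub>R Vt t (x t)"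
      by (subst xh[OF that], subst x[OF that]) (rule refl)
    then show ?thesis
      by (simp add: inner_diff_right)
  qed
  then show ?thesis
    by (simp add: sum_subtractf inner_sum_left)
qed

lemma arrival_prefix_closed:
  fixes \<sigma> :: "nat \<Rightarrow> nat"
  assumes "inj_on \<sigma> {1..T}" and prefix: "A = \<sigma> ` {1..card A}" and "A \<subseteq> {1..T}" "s \<in> A"
    and before: "B \<subseteq> \<sigma> ` {1..<inv_into {1..T} \<sigma> s}"
  shows "B \<subseteq> A"
proof -
  have "card A \<le> T"
    using card_mono[OF _ \<open>A \<subseteq> {1..T}\<close>] by simp
  obtain k where k: "k \<in> {1..card A}" "s = \<sigma> k"
    using \<open>s \<in> A\<close> by (subst (asm) prefix) blast
  then have "inv_into {1..T} \<sigma> s = k"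
    using assms(1) \<open>card A \<le> T\<close> by (auto intro: inv_into_f_f)
  then have "B \<subseteq> \<sigma> ` {1..<k}"
    using before by simp
  also have "\<dots> \<subseteq> \<sigma> ` {1..card A}"
    using k(1) by (intro image_mono) auto
  also have "\<dots> = A"
    by (rule prefix[symmetric])
  finally show ?thesis .
qed

section \<open>Step sizes\<close>

lemma min_recip_mono: "x \<le> y \<Longrightarrow> min_recip x b \<le> min_recip y b"
  by (auto simp: min_recip_def)

lemma min_recip_le: "min_recip x b \<le> x"
  by (auto simp: min_recip_def)

lemma min_recip_le_divide: "b \<noteq> 0 \<Longrightarrow> min_recip x b \<le> 1 / b"
  by (simp add: min_recip_def)

lemma min_recip_nonneg: "0 \<le> x \<Longrightarrow> 0 \<le> b \<Longrightarrow> 0 \<le> min_recip x b"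
  by (auto simp: min_recip_def)

lemma mult_min_recip: "0 < c \<Longrightarrow> c * min_recip x b = min_recip (c * x) (b / c)"
  by (auto simp: min_recip_def min_mult_distrib_left)

lemma divide_min_recip: "0 < x \<Longrightarrow> 0 \<le> b \<Longrightarrow> 1 / min_recip x b = max (1 / x) b"
  by (auto simp: min_recip_def min_def max_def divide_le_eq le_divide_eq field_simps)

definition doda_eta :: "nat \<Rightarrow> real \<Rightarrow> real \<Rightarrow> real \<Rightarrow> real \<Rightarrow> real" where
  "doda_eta \<tau> r L G D = min_recip
     (r / (2 * sqrt ((4 * real \<tau> + 1) * (D + 4 * G\<^sup>2 * (3 * real \<tau> + 1)))))
     (sqrt 2 * L * (4 * real \<tau> + 1))"

definition doda_gamma :: "nat \<Rightarrow> real \<Rightarrow> real \<Rightarrow> real \<Rightarrow> real \<Rightarrow> real" where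
  "doda_gamma \<tau> r L G D = min_recip
     (r * sqrt (4 * real \<tau> + 1) / (2 * sqrt (D + 4 * G\<^sup>2 * (real \<tau> + 1))))
     (sqrt 2 * L)"

lemma doda_eta_nonneg: "0 \<le> r \<Longrightarrow> 0 \<le> L \<Longrightarrow> 0 \<le> D \<Longrightarrow> 0 \<le> doda_eta \<tau> r L G D"
  unfolding doda_eta_def by (intro min_recip_nonneg) auto

lemma doda_gamma_nonneg: "0 \<le> r \<Longrightarrow> 0 \<le> L \<Longrightarrow> 0 \<le> D \<Longrightarrow> 0 \<le> doda_gamma \<tau> r L G D"
  unfolding doda_gamma_def by (intro min_recip_nonneg) auto

lemma doda_eta_antimono:
  assumes "0 \<le> r" "0 < G" "0 \<le> D" "D \<le> D'"
  shows "doda_eta \<tau> r L G D' \<le> doda_eta \<tau> r L G D"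
  unfolding doda_eta_def using assms
  by (intro min_recip_mono divide_left_mono mult_left_mono real_sqrt_le_mono mult_pos_pos)
    (auto intro!: mult_pos_pos add_nonneg_pos)

lemma doda_eta_le_gamma:
  assumes "0 \<le> r" "0 < G" "0 \<le> D"
  shows "(4 * real \<tau> + 1) * doda_eta \<tau> r L G D \<le> doda_gamma \<tau> r L G D"
proof -
  define Q X where "Q = 4 * real \<tau> + 1" and "X = D + 4 * G\<^sup>2 * (3 * real \<tau> + 1)"
  have "Q * (r / (2 * sqrt (Q * X))) = Q / sqrt Q * (r / (2 * sqrt X))"
    by (simp add: real_sqrt_mult)
  also have "\<dots> = r * sqrt Q / (2 * sqrt X)"
    by (simp add: Q_def real_div_sqrt)
  also have "\<dots> \<le> r * sqrt Q / (2 * sqrt (D + 4 * G\<^sup>2 * (real \<tau> + 1)))"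
    using assms by (intro divide_left_mono mult_left_mono real_sqrt_le_mono mult_pos_pos)
      (auto simp: Q_def X_def intro!: mult_pos_pos add_nonneg_pos)
  finally show ?thesis
    unfolding doda_eta_def doda_gamma_def Q_def[symmetric] X_def[symmetric]
    by (simp add: mult_min_recip Q_def min_recip_mono)
qed

lemma doda_gamma_lipschitz:
  assumes "0 \<le> r" "0 \<le> L" "0 \<le> D"
  shows "2 * (L * doda_gamma \<tau> r L G D)\<^sup>2 \<le> 1"
proof (cases "L = 0")
  case False
  have "L * doda_gamma \<tau> r L G D \<le> L * (1 / (sqrt 2 * L))"
    using min_recip_le_divide[of "sqrt 2 * L"] False assms(2)
    by (intro mult_left_mono) (simp_all add: doda_gamma_def)
  also have "\<dots> = 1 / sqrt 2"
    using False by simp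
  finally have "L * doda_gamma \<tau> r L G D \<le> 1 / sqrt 2" .
  moreover have "0 \<le> L * doda_gamma \<tau> r L G D"
    using assms by (simp add: doda_gamma_nonneg)
  ultimately have "(L * doda_gamma \<tau> r L G D)\<^sup>2 \<le> (1 / sqrt 2)\<^sup>2"
    by (auto intro: power_mono)
  then show ?thesis
    by (simp add: power_divide)
qed simp

lemma mult_sub_half_square_le:
  fixes e r w :: real
  assumes "0 < e"
  shows "r * w - e / 2 * w\<^sup>2 \<le> r\<^sup>2 / (2 * e)"
  using sum_squares_bound[of "r" "e * w"] assms
  by (simp add: field_simps power2_eq_square)

lemma doda_eta_tradeoff:
  assumes "0 \<le> r" "0 \<le> L" "0 < G" "0 \<le> VT"
  shows "r * w - doda_eta \<tau> r L G VT / 2 * w\<^sup>2 + r * sqrt (4 * real \<tau> + 1) * sqrt VT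
    \<le> max (sqrt 2 * r\<^sup>2 * L * (4 * real \<tau> + 1))
           (2 * r * sqrt ((4 * real \<tau> + 1) * (VT + 4 * G\<^sup>2 * (3 * real \<tau> + 1))))"
proof (cases "r = 0")
  case True
  then show ?thesis
    using doda_eta_nonneg[of r L VT \<tau> G] assms by (simp add: max_def)
next
  case False
  define Q A B where "Q = 4 * real \<tau> + 1"
    and "A = sqrt (Q * (VT + 4 * G\<^sup>2 * (3 * real \<tau> + 1)))" and "B = sqrt 2 * L * Q"
  define e where "e = doda_eta \<tau> r L G VT"
  have "0 < r" "0 < A" "0 \<le> B"
    using assms False by (auto simp: A_def B_def Q_def intro!: mult_pos_pos add_nonneg_pos)
  have e: "e = min_recip (r / (2 * A)) B"
    by (simp add: e_def doda_eta_def A_def B_def Q_def)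
  have "0 < e"
    using \<open>0 < r\<close> \<open>0 < A\<close> \<open>0 \<le> B\<close> by (auto simp: e min_recip_def)
  have "r * w - e / 2 * w\<^sup>2 \<le> r\<^sup>2 / 2 * (1 / e)"
    using mult_sub_half_square_le[OF \<open>0 < e\<close>] by simp
  also have "\<dots> = max (r * A) (r\<^sup>2 * B / 2)"
    using \<open>0 < r\<close> \<open>0 < A\<close> \<open>0 \<le> B\<close>
    by (simp add: e divide_min_recip max_mult_distrib_left power2_eq_square)
  finally have "r * w - e / 2 * w\<^sup>2 \<le> max (r * A) (r\<^sup>2 * B / 2)" .
  moreover have "r * sqrt Q * sqrt VT \<le> r * A"
  proof -
    have "sqrt Q * sqrt VT \<le> A"
      unfolding A_def real_sqrt_mult[symmetric] Q_def using assms
      by (intro real_sqrt_le_mono mult_left_mono) auto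
    then show ?thesis
      using assms(1) by (simp add: mult.assoc mult_left_mono)
  qed
  ultimately have "r * w - e / 2 * w\<^sup>2 + r * sqrt Q * sqrt VT \<le> max (r\<^sup>2 * B) (2 * r * A)"
    by (auto simp: max_def split: if_splits)
  then show ?thesis
    by (simp add: e_def A_def B_def Q_def ac_simps)
qed

section \<open>Quadratic forms under bounded delays\<close>

locale delayed_feedback =
  fixes T \<tau> :: nat and S :: "nat \<Rightarrow> nat set"
  assumes past: "\<And>t. t \<in> {1..T} \<Longrightarrow> S t \<subseteq> {1..<t}"
    and delay: "\<And>t. t \<in> {1..T} \<Longrightarrow> {1..t - \<tau> - 1} \<subseteq> S t"
begin

lemma received_subset: "t \<in> {1..T} \<Longrightarrow> S t \<subseteq> {1..T}"
  using past by fastforce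

lemma received_finite: "t \<in> {1..T} \<Longrightarrow> finite (S t)"
  using received_subset finite_subset by blast

lemma received_before: "t \<in> {1..T} \<Longrightarrow> s \<in> S t \<Longrightarrow> s < t"
  using past by fastforce

definition concurrent :: "nat \<Rightarrow> nat \<Rightarrow> bool" where
  "concurrent s t \<longleftrightarrow> s \<noteq> t \<and> s \<notin> S t \<and> t \<notin> S s"

lemma concurrent_near:
  assumes "s \<in> {1..T}" "t \<in> {1..T}" "concurrent s t"
  shows "t \<noteq> s \<and> s \<le> t + \<tau> \<and> t \<le> s + \<tau>"
  using assms delay[of s] delay[of t] unfolding concurrent_def by fastforce

lemma sum_concurrent_le:
  assumes "\<And>s. s \<in> {1..T} \<Longrightarrow> 0 \<le> h s"
  shows "(\<Sum>s\<in>{1..T}. \<Sum>t\<in>{1..T}. if concurrent s t then (h s + h t) / 2 else 0)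
    \<le> 2 * real \<tau> * (\<Sum>s\<in>{1..T}. h s)"
proof -
  let ?I = "{1..T}"
  have "(\<Sum>s\<in>?I. \<Sum>t\<in>?I. if concurrent s t then (h s + h t) / 2 else 0)
      = (\<Sum>s\<in>?I. \<Sum>t\<in>?I. (if concurrent s t then h s else 0) / 2 + (if concurrent s t then h t else 0) / 2)"
    by (intro sum.cong refl) simp
  also have "\<dots> = (\<Sum>s\<in>?I. \<Sum>t\<in>?I. if concurrent s t then h s else 0) / 2
        + (\<Sum>s\<in>?I. \<Sum>t\<in>?I. if concurrent s t then h t else 0) / 2"
    by (simp add: sum.distrib sum_divide_distrib)
  also have "(\<Sum>s\<in>?I. \<Sum>t\<in>?I. if concurrent s t then h t else 0)
      = (\<Sum>s\<in>?I. \<Sum>t\<in>?I. if concurrent s t then h s else 0)"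
    by (subst sum.swap) (auto simp: concurrent_def intro!: sum.cong)
  also have "(\<Sum>s\<in>?I. \<Sum>t\<in>?I. if concurrent s t then h s else 0) \<le> 2 * real \<tau> * (\<Sum>s\<in>?I. h s)"
    using assms concurrent_near by (intro sum_sum_near_le) auto
  finally show ?thesis
    by simp
qed

lemma sum_inner_received_symmetric:
  fixes g :: "nat \<Rightarrow> 'a::real_inner"
  shows "(\<Sum>t\<in>{1..T}. \<eta> t * (g t \<bullet> (\<Sum>s\<in>S t. g s)))
    = (\<Sum>s\<in>{1..T}. \<Sum>t\<in>{1..T}.
        ((if s \<in> S t then \<eta> t else 0) + (if t \<in> S s then \<eta> s else 0)) / 2 * (g s \<bullet> g t))"
proof -
  let ?I = "{1..T}"
  define a where "a s t = (if s \<in> S t then \<eta> t * (g s \<bullet> g t) else 0)" for s t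
  have "(\<Sum>t\<in>?I. \<eta> t * (g t \<bullet> (\<Sum>s\<in>S t. g s))) = (\<Sum>t\<in>?I. \<Sum>s\<in>?I. a s t)"
  proof (rule sum.cong[OF refl])
    fix t assume "t \<in> ?I"
    then have "(\<Sum>s\<in>?I. a s t) = (\<Sum>s\<in>S t. \<eta> t * (g s \<bullet> g t))"
      using received_subset by (simp add: a_def sum.If_cases Int_absorb1)
    then show "\<eta> t * (g t \<bullet> (\<Sum>s\<in>S t. g s)) = (\<Sum>s\<in>?I. a s t)"
      by (simp add: inner_sum_right sum_distrib_left inner_commute)
  qed
  also have "\<dots> = (\<Sum>s\<in>?I. \<Sum>t\<in>?I. (a s t + a t s) / 2)"
    using sum.swap[of a ?I ?I] by (simp add: sum.distrib sum_divide_distrib[symmetric])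
  also have "\<dots> = (\<Sum>s\<in>?I. \<Sum>t\<in>?I.
      ((if s \<in> S t then \<eta> t else 0) + (if t \<in> S s then \<eta> s else 0)) / 2 * (g s \<bullet> g t))"
    by (intro sum.cong refl) (auto simp: a_def inner_commute distrib_right)
  finally show ?thesis .
qed

lemma received_weight_lower_bound:
  fixes g :: "nat \<Rightarrow> 'a::real_inner"
  assumes antimono: "\<And>t s. t \<in> {1..T} \<Longrightarrow> s \<in> S t \<Longrightarrow> \<eta> t \<le> \<eta> s"
    and "s \<in> {1..T}" "t \<in> {1..T}" "0 \<le> \<eta> s" "0 \<le> \<eta> t"
  shows "min (\<eta> s) (\<eta> t) * (g s \<bullet> g t) - (if s = t then \<eta> t * (norm (g t))\<^sup>2 else 0)
      - (if concurrent s t then (\<eta> s * (norm (g s))\<^sup>2 + \<eta> t * (norm (g t))\<^sup>2) / 2 else 0)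
    \<le> ((if s \<in> S t then \<eta> t else 0) + (if t \<in> S s then \<eta> s else 0)) * (g s \<bullet> g t)"
proof -
  consider "s = t" | "s \<in> S t" | "t \<in> S s" | "concurrent s t"
    unfolding concurrent_def by blast
  then show ?thesis
  proof cases
    case 1
    then show ?thesis
      using received_before[OF assms(3)] by (auto simp: concurrent_def power2_norm_eq_inner)
  next
    case 2
    then have "t \<notin> S s" "s \<noteq> t" "\<eta> t \<le> \<eta> s"
      using received_before assms by (blast dest: less_asym)+
    then show ?thesis
      using 2 by (simp add: concurrent_def min_def)
  next
    case 3
    then have "s \<notin> S t" "s \<noteq> t" "\<eta> s \<le> \<eta> t"
      using received_before assms by (blast dest: less_asym)+
    then show ?thesis
      using 3 by (simp add: concurrent_def min_def inner_commute)
  next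
    case 4
    then show ?thesis
      using min_mult_inner_le[OF assms(4,5), of "g s" "g t"] by (auto simp: concurrent_def)
  qed
qed

text \<open>Pairs in which one round has received the other contribute the weight min(eta_s, eta_t)
  since eta decreases along received sets; the remaining concurrent pairs are absorbed by the
  diagonal surplus gamma_t - eta_t >= 2 tau eta_t.\<close>
lemma quadratic_form_lower_bound:
  fixes g :: "nat \<Rightarrow> 'a::real_inner"
  assumes antimono: "\<And>t s. t \<in> {1..T} \<Longrightarrow> s \<in> S t \<Longrightarrow> \<eta> t \<le> \<eta> s"
    and lower: "\<And>t. t \<in> {1..T} \<Longrightarrow> e \<le> \<eta> t" and "0 \<le> e"
    and dominant: "\<And>t. t \<in> {1..T} \<Longrightarrow> (2 * real \<tau> + 1) * \<eta> t \<le> \<gamma> t"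
  shows "e / 2 * (norm (\<Sum>t=1..T. g t))\<^sup>2
    \<le> (\<Sum>t=1..T. \<eta> t * (g t \<bullet> (\<Sum>s\<in>S t. g s))) + (\<Sum>t=1..T. \<gamma> t / 2 * (norm (g t))\<^sup>2)"
proof -
  let ?I = "{1..T}"
  define h where "h s = \<eta> s * (norm (g s))\<^sup>2" for s
  have \<eta>_nonneg: "0 \<le> \<eta> t" if "t \<in> ?I" for t
    using lower[OF that] \<open>0 \<le> e\<close> by linarith
  have "e * (norm (\<Sum>t\<in>?I. g t))\<^sup>2 \<le> (\<Sum>s\<in>?I. \<Sum>t\<in>?I. min (\<eta> s) (\<eta> t) * (g s \<bullet> g t))"
    using lower by (intro min_kernel_sum_inner_ge) auto
  moreover have "(\<Sum>s\<in>?I. \<Sum>t\<in>?I. min (\<eta> s) (\<eta> t) * (g s \<bullet> g t))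
      - (\<Sum>s\<in>?I. \<Sum>t\<in>?I. if s = t then h t else 0)
      - (\<Sum>s\<in>?I. \<Sum>t\<in>?I. if concurrent s t then (h s + h t) / 2 else 0)
      \<le> 2 * (\<Sum>t\<in>?I. \<eta> t * (g t \<bullet> (\<Sum>s\<in>S t. g s)))"
  proof -
    have "(\<Sum>s\<in>?I. \<Sum>t\<in>?I. min (\<eta> s) (\<eta> t) * (g s \<bullet> g t) - (if s = t then h t else 0)
          - (if concurrent s t then (h s + h t) / 2 else 0))
        \<le> (\<Sum>s\<in>?I. \<Sum>t\<in>?I.
          ((if s \<in> S t then \<eta> t else 0) + (if t \<in> S s then \<eta> s else 0)) * (g s \<bullet> g t))"
      unfolding h_def by (intro sum_mono received_weight_lower_bound[OF antimono] \<eta>_nonneg) auto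
    moreover have "(\<Sum>s\<in>?I. \<Sum>t\<in>?I.
          ((if s \<in> S t then \<eta> t else 0) + (if t \<in> S s then \<eta> s else 0)) * (g s \<bullet> g t))
        = 2 * (\<Sum>t\<in>?I. \<eta> t * (g t \<bullet> (\<Sum>s\<in>S t. g s)))"
      unfolding sum_inner_received_symmetric by (simp add: sum_distrib_left)
    ultimately show ?thesis
      by (simp add: sum_subtractf)
  qed
  moreover have "(\<Sum>s\<in>?I. \<Sum>t\<in>?I. if s = t then h t else 0) = (\<Sum>s\<in>?I. h s)"
    by simp
  moreover have "(\<Sum>s\<in>?I. \<Sum>t\<in>?I. if concurrent s t then (h s + h t) / 2 else 0)
      \<le> 2 * real \<tau> * (\<Sum>s\<in>?I. h s)"
    using \<eta>_nonneg by (intro sum_concurrent_le) (simp add: h_def)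
  moreover have "(2 * real \<tau> + 1) * (\<Sum>t\<in>?I. h t) \<le> (\<Sum>t\<in>?I. \<gamma> t * (norm (g t))\<^sup>2)"
    unfolding sum_distrib_left h_def mult.assoc[symmetric]
    using dominant by (intro sum_mono mult_right_mono) auto
  ultimately show ?thesis
    by (simp add: sum_divide_distrib[symmetric] sum_distrib_left[symmetric] field_simps)
qed

lemma doda_regret_le:
  fixes f :: "nat \<Rightarrow> 'a::real_inner \<Rightarrow> real" and V Vt :: "nat \<Rightarrow> 'a \<Rightarrow> 'a"
  assumes convex: "\<And>t. t \<in> {1..T} \<Longrightarrow> convex_on UNIV (f t)"
    and grad: "\<And>t y. t \<in> {1..T} \<Longrightarrow> (f t has_derivative (\<lambda>h. V t y \<bullet> h)) (at y)"
    and lip: "\<And>t. t \<in> {1..T} \<Longrightarrow> L-lipschitz_on UNIV (V t)"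
    and antimono: "\<And>t s. t \<in> {1..T} \<Longrightarrow> s \<in> S t \<Longrightarrow> \<eta> t \<le> \<eta> s"
    and lower: "\<And>t. t \<in> {1..T} \<Longrightarrow> e \<le> \<eta> t" and "0 \<le> e"
    and dominant: "\<And>t. t \<in> {1..T} \<Longrightarrow> (2 * real \<tau> + 1) * \<eta> t \<le> \<gamma> t"
    and small: "\<And>t. t \<in> {1..T} \<Longrightarrow> 2 * (L * \<gamma> t)\<^sup>2 \<le> 1"
    and x: "\<And>t. t \<in> {1..T} \<Longrightarrow> x t = x 1 - \<eta> t *\<^sub>R (\<Sum>s\<in>S t. V s (xh s))"
    and xh: "\<And>t. t \<in> {1..T} \<Longrightarrow> xh t = x t - \<gamma> t *\<^sub>R Vt t (x t)"
    and near: "norm (p - x 1) \<le> r"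
  shows "(\<Sum>t=1..T. f t (xh t)) - (\<Sum>t=1..T. f t p)
    \<le> r * norm (\<Sum>t=1..T. V t (xh t)) - e / 2 * (norm (\<Sum>t=1..T. V t (xh t)))\<^sup>2
      + (\<Sum>t=1..T. \<gamma> t * (norm (V t (x t) - Vt t (x t)))\<^sup>2)"
proof -
  define g where "g t = V t (xh t)" for t
  define W where "W = (\<Sum>t=1..T. g t)"
  have "(\<Sum>t=1..T. \<gamma> t / 2 * (norm (g t))\<^sup>2) - (\<Sum>t=1..T. \<gamma> t * (norm (V t (x t) - Vt t (x t)))\<^sup>2)
      \<le> (\<Sum>t=1..T. \<gamma> t * (g t \<bullet> Vt t (x t)))"
  proof -
    have "0 \<le> \<gamma> t" if "t \<in> {1..T}" for t
    proof -
      have "0 \<le> (2 * real \<tau> + 1) * \<eta> t"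
        using lower[OF that] \<open>0 \<le> e\<close> by simp
      then show ?thesis
        using dominant[OF that] by linarith
    qed
    then have "\<gamma> t / 2 * (norm (g t))\<^sup>2 - \<gamma> t * (norm (V t (x t) - Vt t (x t)))\<^sup>2
        \<le> \<gamma> t * (g t \<bullet> Vt t (x t))" if "t \<in> {1..T}" for t
      using lipschitz_extragradient_inner_lower_bound[OF lip small, of t t] xh that by (simp add: g_def)
    then have "(\<Sum>t=1..T. \<gamma> t / 2 * (norm (g t))\<^sup>2 - \<gamma> t * (norm (V t (x t) - Vt t (x t)))\<^sup>2)
        \<le> (\<Sum>t=1..T. \<gamma> t * (g t \<bullet> Vt t (x t)))"
      by (rule sum_mono)
    then show ?thesis
      by (simp add: sum_subtractf)
  qed
  moreover have "e / 2 * (norm W)\<^sup>2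
      \<le> (\<Sum>t=1..T. \<eta> t * (g t \<bullet> (\<Sum>s\<in>S t. g s))) + (\<Sum>t=1..T. \<gamma> t / 2 * (norm (g t))\<^sup>2)"
    unfolding W_def using antimono lower \<open>0 \<le> e\<close> dominant
    by (rule quadratic_form_lower_bound)
  moreover have "W \<bullet> (x 1 - p) \<le> r * norm W"
    using norm_cauchy_schwarz[of W "x 1 - p"] near mult_left_mono[OF near, of "norm W"]
    by (simp add: norm_minus_commute mult.commute)
  moreover have "(\<Sum>t=1..T. f t (xh t)) - (\<Sum>t=1..T. f t p) \<le> (\<Sum>t=1..T. g t \<bullet> (xh t - p))"
    unfolding g_def using convex grad by (rule sum_convex_diff_le_sum_inner_gradient)
  moreover have "(\<Sum>t=1..T. g t \<bullet> (xh t - p)) = W \<bullet> (x 1 - p)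
      - (\<Sum>t=1..T. \<eta> t * (g t \<bullet> (\<Sum>s\<in>S t. g s))) - (\<Sum>t=1..T. \<gamma> t * (g t \<bullet> Vt t (x t)))"
    unfolding g_def W_def using x xh by (rule sum_inner_doda_step_eq)
  ultimately show ?thesis
    by (simp add: W_def g_def)
qed

end

section \<open>Adaptive step sizes\<close>

locale doda_adaptive = delayed_feedback T \<tau> S for T \<tau> :: nat and S +
  fixes f :: "nat \<Rightarrow> 'a::real_inner \<Rightarrow> real" and V Vt :: "nat \<Rightarrow> 'a \<Rightarrow> 'a"
    and x xh :: "nat \<Rightarrow> 'a" and \<gamma> \<eta> :: "nat \<Rightarrow> real" and L G r :: real and p :: 'a
  assumes convex: "\<And>t. t \<in> {1..T} \<Longrightarrow> convex_on UNIV (f t)"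
    and grad: "\<And>t y. t \<in> {1..T} \<Longrightarrow> (f t has_derivative (\<lambda>h. V t y \<bullet> h)) (at y)"
    and lip: "\<And>t. t \<in> {1..T} \<Longrightarrow> L-lipschitz_on UNIV (V t)" and L_nonneg: "0 \<le> L"
    and bound_V: "\<And>t y. t \<in> {1..T} \<Longrightarrow> norm (V t y) \<le> G"
    and bound_Vt: "\<And>t y. t \<in> {1..T} \<Longrightarrow> norm (Vt t y) \<le> G" and G_pos: "0 < G"
    and nested: "\<And>t s. t \<in> {1..T} \<Longrightarrow> s \<in> S t \<Longrightarrow> S s \<subseteq> S t"
    and x_eq: "\<And>t. t \<in> {1..T} \<Longrightarrow> x t = x 1 - \<eta> t *\<^sub>R (\<Sum>s\<in>S t. V s (xh s))"
    and xh_eq: "\<And>t. t \<in> {1..T} \<Longrightarrow> xh t = x t - \<gamma> t *\<^sub>R Vt t (x t)"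
    and \<gamma>_eq: "\<And>t. t \<in> {1..T} \<Longrightarrow>
      \<gamma> t = doda_gamma \<tau> r L G (\<Sum>s\<in>S t. (norm (V s (x s) - Vt s (x s)))\<^sup>2)"
    and \<eta>_eq: "\<And>t. t \<in> {1..T} \<Longrightarrow>
      \<eta> t = doda_eta \<tau> r L G (\<Sum>s\<in>S t. (norm (V s (x s) - Vt s (x s)))\<^sup>2)"
    and near: "norm (p - x 1) \<le> r"
begin

definition err :: "nat \<Rightarrow> real" where
  "err t = (norm (V t (x t) - Vt t (x t)))\<^sup>2"

definition D :: "nat \<Rightarrow> real" where
  "D t = (\<Sum>s\<in>S t. err s)"

definition VT :: real where
  "VT = (\<Sum>t=1..T. err t)"

lemma r_nonneg: "0 \<le> r"
  using near norm_ge_zero order_trans by blast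

lemma err_nonneg: "0 \<le> err t"
  by (simp add: err_def)

lemma err_le: "t \<in> {1..T} \<Longrightarrow> err t \<le> 4 * G\<^sup>2"
proof -
  assume t: "t \<in> {1..T}"
  have "norm (V t (x t) - Vt t (x t)) \<le> 2 * G"
    using norm_triangle_ineq4[of "V t (x t)" "Vt t (x t)"] bound_V[OF t, of "x t"]
      bound_Vt[OF t, of "x t"]
    by linarith
  then show ?thesis
    unfolding err_def using power_mono[of _ "2 * G" 2] by (simp add: power_mult_distrib)
qed

lemma D_nonneg: "0 \<le> D t"
  by (simp add: D_def err_nonneg sum_nonneg)

lemma D_le_VT: "t \<in> {1..T} \<Longrightarrow> D t \<le> VT"
  unfolding D_def VT_def using received_subset by (intro sum_mono2) (auto simp: err_nonneg)

lemma D_mono: "t \<in> {1..T} \<Longrightarrow> s \<in> S t \<Longrightarrow> D s \<le> D t"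
  unfolding D_def using nested received_finite by (intro sum_mono2) (auto simp: err_nonneg)

lemma \<eta>_D: "t \<in> {1..T} \<Longrightarrow> \<eta> t = doda_eta \<tau> r L G (D t)"
  using \<eta>_eq by (simp add: D_def err_def)

lemma \<gamma>_D: "t \<in> {1..T} \<Longrightarrow> \<gamma> t = doda_gamma \<tau> r L G (D t)"
  using \<gamma>_eq by (simp add: D_def err_def)

lemma \<eta>_antimono:
  assumes "t \<in> {1..T}" "s \<in> S t"
  shows "\<eta> t \<le> \<eta> s"
proof -
  have "s \<in> {1..T}"
    using assms received_subset by blast
  then show ?thesis
    using assms \<eta>_D D_mono[OF assms] r_nonneg G_pos D_nonneg by (simp add: doda_eta_antimono)
qed

lemma \<eta>_lower: "t \<in> {1..T} \<Longrightarrow> doda_eta \<tau> r L G VT \<le> \<eta> t"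
  using \<eta>_D D_le_VT r_nonneg G_pos D_nonneg doda_eta_antimono by simp

lemma \<eta>_dominated: "t \<in> {1..T} \<Longrightarrow> (2 * real \<tau> + 1) * \<eta> t \<le> \<gamma> t"
proof -
  assume t: "t \<in> {1..T}"
  have "(2 * real \<tau> + 1) * \<eta> t \<le> (4 * real \<tau> + 1) * \<eta> t"
    using \<eta>_D[OF t] r_nonneg L_nonneg D_nonneg by (intro mult_right_mono) (auto simp: doda_eta_nonneg)
  also have "\<dots> \<le> \<gamma> t"
    using \<eta>_D[OF t] \<gamma>_D[OF t] r_nonneg G_pos D_nonneg by (simp add: doda_eta_le_gamma)
  finally show ?thesis .
qed

lemma \<gamma>_small: "t \<in> {1..T} \<Longrightarrow> 2 * (L * \<gamma> t)\<^sup>2 \<le> 1"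
  using \<gamma>_D r_nonneg L_nonneg D_nonneg by (simp add: doda_gamma_lipschitz)

lemma sum_\<gamma>_err_le: "(\<Sum>t=1..T. \<gamma> t * err t) \<le> r * sqrt (4 * real \<tau> + 1) * sqrt VT"
proof -
  have "(\<Sum>t=1..T. \<gamma> t * err t) \<le> 2 * (r * sqrt (4 * real \<tau> + 1) / 2) * sqrt VT"
    unfolding VT_def
  proof (rule sum_mult_adaptive_step_le[OF err_nonneg])
    fix t assume t: "t \<in> {1..T}"
    show "(\<Sum>s=1..t. err s) \<le> D t + 4 * G\<^sup>2 * (real \<tau> + 1)"
      using sum_upto_le_delayed_sum[OF delay[OF t], of err "4 * G\<^sup>2"] received_subset[OF t] err_le t
      by (auto simp: D_def err_nonneg received_finite algebra_simps)
    show "\<gamma> t \<le> r * sqrt (4 * real \<tau> + 1) / 2 / sqrt (D t + 4 * G\<^sup>2 * (real \<tau> + 1))"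
      using \<gamma>_D[OF t] min_recip_le by (simp add: doda_gamma_def)
  qed (use r_nonneg in simp)
  then show ?thesis
    by simp
qed

lemma regret_bound:
  "(\<Sum>t=1..T. f t (xh t)) - (\<Sum>t=1..T. f t p)
    \<le> max (sqrt 2 * r\<^sup>2 * L * (4 * real \<tau> + 1))
           (2 * r * sqrt ((4 * real \<tau> + 1) *
              ((\<Sum>t=1..T. (norm (V t (x t) - Vt t (x t)))\<^sup>2) + 4 * G\<^sup>2 * (3 * real \<tau> + 1))))"
proof -
  define w where "w = norm (\<Sum>t=1..T. V t (xh t))"
  have "0 \<le> doda_eta \<tau> r L G VT"
    using r_nonneg L_nonneg by (simp add: VT_def err_nonneg sum_nonneg doda_eta_nonneg)
  from convex grad lip \<eta>_antimono \<eta>_lower this \<eta>_dominated \<gamma>_small x_eq xh_eq near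
  have "(\<Sum>t=1..T. f t (xh t)) - (\<Sum>t=1..T. f t p)
      \<le> r * w - doda_eta \<tau> r L G VT / 2 * w\<^sup>2 + (\<Sum>t=1..T. \<gamma> t * err t)"
    unfolding w_def err_def by (rule doda_regret_le)
  also have "\<dots> \<le> r * w - doda_eta \<tau> r L G VT / 2 * w\<^sup>2 + r * sqrt (4 * real \<tau> + 1) * sqrt VT"
    using sum_\<gamma>_err_le by simp
  also have "\<dots> \<le> max (sqrt 2 * r\<^sup>2 * L * (4 * real \<tau> + 1))
      (2 * r * sqrt ((4 * real \<tau> + 1) * (VT + 4 * G\<^sup>2 * (3 * real \<tau> + 1))))"
    using r_nonneg L_nonneg G_pos by (intro doda_eta_tradeoff) (simp_all add: VT_def err_nonneg sum_nonneg)
  finally show ?thesis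
    by (simp add: VT_def err_def)
qed

end

theorem proposition7:
  fixes T :: nat and \<tau> :: nat
    and f :: "nat \<Rightarrow> 'a::euclidean_space \<Rightarrow> real"
    and V :: "nat \<Rightarrow> 'a \<Rightarrow> 'a"
    and Vt :: "nat \<Rightarrow> 'a \<Rightarrow> 'a"
    and act :: "nat \<Rightarrow> 'ag"
    and S :: "'ag \<Rightarrow> nat \<Rightarrow> nat set"
    and \<sigma> :: "'ag \<Rightarrow> nat \<Rightarrow> nat"
    and x xh :: "nat \<Rightarrow> 'a"
    and \<gamma> \<eta> :: "nat \<Rightarrow> real"
    and L G r :: real and p :: 'a
  assumes convex: "\<forall>t\<in>{1..T}. convex_on UNIV (f t)"
    and grad: "\<forall>t\<in>{1..T}. \<forall>y. (f t has_derivative (\<lambda>h. V t y \<bullet> h)) (at y)"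
    and lip: "\<forall>t\<in>{1..T}. L-lipschitz_on UNIV (V t)"
    and bndV: "\<forall>t\<in>{1..T}. \<forall>y. norm (V t y) \<le> G"
    and bndVt: "\<forall>t\<in>{1..T}. \<forall>y. norm (Vt t y) \<le> G"
    and S_past: "\<forall>i. \<forall>t\<in>{1..T}. S i t \<subseteq> {1..<t}"
    and S_mono: "\<forall>i. \<forall>t\<in>{1..T}. \<forall>t'\<in>{1..T}. t \<le> t' \<longrightarrow> S i t \<subseteq> S i t'"
    and \<sigma>_perm: "\<forall>i. bij_betw (\<sigma> i) {1..T} {1..T}"
    and \<sigma>_cons: "\<forall>i. \<forall>t\<in>{1..T}. S i t = \<sigma> i ` {1..card (S i t)}"
    and delay: "\<forall>t\<in>{1..T}. {1..t - \<tau> - 1} \<subseteq> S (act t) t"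
    and S_R: "\<forall>i. \<forall>t\<in>{1..T}.
                S (act t) t \<subseteq> \<sigma> i ` {1..<inv_into {1..T} (\<sigma> i) t}"
    and hint: "\<forall>t\<in>{1..T}. (S (act t) t \<noteq> {} \<longrightarrow> (\<exists>s\<in>S (act t) t. Vt t = V s))
                          \<and> (S (act t) t = {} \<longrightarrow> Vt t = (\<lambda>_. 0))"
    and x_eq: "\<forall>t\<in>{1..T}. x t = x 1 - \<eta> t *\<^sub>R (\<Sum>s\<in>S (act t) t. V s (xh s))"
    and xh_eq: "\<forall>t\<in>{1..T}. xh t = x t - \<gamma> t *\<^sub>R Vt t (x t)"
    and \<gamma>_eq: "\<forall>t\<in>{1..T}. \<gamma> t =
        (let D = (\<Sum>s\<in>S (act t) t. (norm (V s (x s) - Vt s (x s)))\<^sup>2) in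
          min_recip (r * sqrt (4 * real \<tau> + 1) / (2 * sqrt (D + 4 * G\<^sup>2 * (real \<tau> + 1))))
                    (sqrt 2 * L))"
    and \<eta>_eq: "\<forall>t\<in>{1..T}. \<eta> t =
        (let D = (\<Sum>s\<in>S (act t) t. (norm (V s (x s) - Vt s (x s)))\<^sup>2) in
          min_recip (r / (2 * sqrt ((4 * real \<tau> + 1) * (D + 4 * G\<^sup>2 * (3 * real \<tau> + 1)))))
                    (sqrt 2 * L * (4 * real \<tau> + 1)))"
    and p_near: "norm (p - x 1) \<le> r"
  shows "(\<Sum>t=1..T. f t (xh t)) - (\<Sum>t=1..T. f t p)
         \<le> max (sqrt 2 * r\<^sup>2 * L * (4 * real \<tau> + 1))
                (2 * r * sqrt ((4 * real \<tau> + 1) *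
                   ((\<Sum>t=1..T. (norm (V t (x t) - Vt t (x t)))\<^sup>2) + 4 * G\<^sup>2 * (3 * real \<tau> + 1))))"
proof (cases "T = 0 \<or> G \<le> 0")
  case True
  have "V t (xh t) = 0" if "t \<in> {1..T}" for t
  proof -
    have "G \<le> 0"
      using True that by auto
    then show ?thesis
      using bndV that by (meson norm_le_zero_iff order_trans)
  qed
  then have "(\<Sum>t=1..T. f t (xh t)) - (\<Sum>t=1..T. f t p) \<le> 0"
    using sum_convex_diff_le_sum_inner_gradient[of "{1..T}" f V xh p] convex grad by simp
  moreover have "0 \<le> r"
    using p_near norm_ge_zero order_trans by blast
  then have "0 \<le> 2 * r * sqrt ((4 * real \<tau> + 1) *
      ((\<Sum>t=1..T. (norm (V t (x t) - Vt t (x t)))\<^sup>2) + 4 * G\<^sup>2 * (3 * real \<tau> + 1)))"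
    by (simp add: sum_nonneg)
  ultimately show ?thesis
    by (simp add: le_max_iff_disj)
next
  case False
  then have "0 < G" "1 \<in> {1..T}"
    by auto
  then have "0 \<le> L"
    using lip lipschitz_on_nonneg by blast
  have nested: "S (act s) s \<subseteq> S (act t) t" if "t \<in> {1..T}" "s \<in> S (act t) t" for s t
  proof (rule arrival_prefix_closed)
    show "inj_on (\<sigma> (act t)) {1..T}"
      using \<sigma>_perm bij_betw_imp_inj_on by blast
    show "S (act t) t = \<sigma> (act t) ` {1..card (S (act t) t)}"
      using \<sigma>_cons that(1) by blast
    show "S (act t) t \<subseteq> {1..T}"
      using S_past that(1) by fastforce
    show "S (act s) s \<subseteq> \<sigma> (act t) ` {1..<inv_into {1..T} (\<sigma> (act t)) s}"
      using S_R S_past that by fastforce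
  qed (fact that(2))
  have step_sizes:
    "\<gamma> t = doda_gamma \<tau> r L G (\<Sum>s\<in>S (act t) t. (norm (V s (x s) - Vt s (x s)))\<^sup>2)"
    "\<eta> t = doda_eta \<tau> r L G (\<Sum>s\<in>S (act t) t. (norm (V s (x s) - Vt s (x s)))\<^sup>2)"
    if "t \<in> {1..T}" for t
    using \<gamma>_eq \<eta>_eq that by (simp_all add: doda_gamma_def doda_eta_def Let_def)
  interpret doda_adaptive T \<tau> "\<lambda>t. S (act t) t" f V Vt x xh \<gamma> \<eta> L G r p
    by unfold_locales (fact S_past[rule_format] delay[rule_format] convex[rule_format] grad[rule_format]
        lip[rule_format] \<open>0 \<le> L\<close> bndV[rule_format] bndVt[rule_format] \<open>0 < G\<close> nested
        x_eq[rule_format] xh_eq[rule_format] step_sizes p_near)+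
  show ?thesis
    by (rule regret_bound)
qed

end
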